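(* Let $f(z)=z+a_2z^2+a_3z^3+\cdots$ be analytic in the unit disk $\mathbb{D}=\{z:|z|<1\}$ with $a_2=0$, and let $f^{-1}(w)=w+A_2w^2+A_3w^3+A_4w^4+A_5w^5+\cdots$ be the expansion of its inverse function near $w=0$. Set $H_2(3)(f^{-1})=A_3A_5-A_4^2$. Then: (a) if $\operatorname{Re} f'(z)>0$ for all $z\in\mathbb{D}$, then $|H_2(3)(f^{-1})|\le \frac{28}{45}$; (b) if $\operatorname{Re}\left[1+\frac{zf''(z)}{f'(z)}\right]>0$ for all $z\in\mathbb{D}$, then $|H_2(3)(f^{-1})|\le \frac{2}{45}$; (c) if $\operatorname{Re}\frac{zf'(z)}{f(z)}>0$ for all $z\in\mathbb{D}$, then $|H_2(3)(f^{-1})|\le 2$; (d) if $\operatorname{Re}\frac{2zf'(z)}{f(z)-f(-z)}>0$ for all $z\in\mathbb{D}$, then $|H_2(3)(f^{-1})|\le 2$. All these bounds are sharp, i.e., in each case the bound is attained by some function $f$ in the respective class with $a_2=0$.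
   Context: The four conditions define, respectively, the classes of functions of bounded turning, convex functions, starlike functions, and functions starlike with respect to symmetric points (all normalized by $f(0)=0$, $f'(0)=1$); such functions are univalent in $\mathbb{D}$, so $f^{-1}$ exists and is analytic in a neighbourhood of $0$. *)

theory Defs
  imports "HOL-Complex_Analysis.Complex_Analysis"
begin

definition tcoeff :: "(complex \<Rightarrow> complex) \<Rightarrow> nat \<Rightarrow> complex" where
  "tcoeff f n = (deriv ^^ n) f 0 / of_nat (fact n)"

definition normalized_analytic :: "(complex \<Rightarrow> complex) \<Rightarrow> bool" where
  "normalized_analytic f \<longleftrightarrow> f holomorphic_on ball 0 1 \<and> f 0 = 0 \<and> deriv f 0 = 1"

definition local_inverse ::
  "(complex \<Rightarrow> complex) \<Rightarrow> (complex \<Rightarrow> complex) \<Rightarrow> complex set \<Rightarrow> bool" where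
  "local_inverse f g S \<longleftrightarrow> open S \<and> 0 \<in> S \<and> g holomorphic_on S \<and> g 0 = 0 \<and>
     g ` S \<subseteq> ball 0 1 \<and> (\<forall>w\<in>S. f (g w) = w)"

definition hankel23 :: "(complex \<Rightarrow> complex) \<Rightarrow> complex" where
  "hankel23 g = tcoeff g 3 * tcoeff g 5 - (tcoeff g 4)^2"

definition bounded_turning :: "(complex \<Rightarrow> complex) \<Rightarrow> bool" where
  "bounded_turning f \<longleftrightarrow> normalized_analytic f \<and>
     (\<forall>z\<in>ball 0 1. Re (deriv f z) > 0)"

definition convex_fun :: "(complex \<Rightarrow> complex) \<Rightarrow> bool" where
  "convex_fun f \<longleftrightarrow> normalized_analytic f \<and>
     (\<forall>z\<in>ball 0 1. deriv f z \<noteq> 0 \<and>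
        Re (1 + z * deriv (deriv f) z / deriv f z) > 0)"

definition starlike_fun :: "(complex \<Rightarrow> complex) \<Rightarrow> bool" where
  "starlike_fun f \<longleftrightarrow> normalized_analytic f \<and>
     (\<forall>z\<in>ball 0 1 - {0}. f z \<noteq> 0 \<and> Re (z * deriv f z / f z) > 0)"

definition starlike_sym :: "(complex \<Rightarrow> complex) \<Rightarrow> bool" where
  "starlike_sym f \<longleftrightarrow> normalized_analytic f \<and>
     (\<forall>z\<in>ball 0 1 - {0}. f z - f (-z) \<noteq> 0 \<and>
        Re (2 * z * deriv f z / (f z - f (-z))) > 0)"

definition sharp_inv_hankel_bound :: "((complex \<Rightarrow> complex) \<Rightarrow> bool) \<Rightarrow> real \<Rightarrow> bool" where
  "sharp_inv_hankel_bound P B \<longleftrightarrow>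
     (\<forall>f g S. P f \<and> tcoeff f 2 = 0 \<and> local_inverse f g S \<longrightarrow> cmod (hankel23 g) \<le> B) \<and>
     (\<exists>f g S. P f \<and> tcoeff f 2 = 0 \<and> local_inverse f g S \<and> cmod (hankel23 g) = B)"

end

(*
  With a_2 = 0, comparing coefficients in f (f^-1 w) = w gives A_3 = -a_3, A_4 = -a_4 and
  A_5 = 3 a_3^2 - a_5, so H_2(3)(f^-1) = a_3 a_5 - 3 a_3^3 - a_4^2.  Each class attaches to f a
  Caratheodory function p (p 0 = 1, Re p > 0), namely f', 1 + z f''/f', z f'/f and
  2 z f'/(f z - f (-z)); the convex case is reduced to the starlike one by Alexander's theorem
  (z f' is starlike when f is convex).  Writing p = (1 + w)/(1 - w), the normalisation a_2 = 0
  forces w z = z^2 h z with |h| <= 1, and H becomes b x u - a x^3 - c y^2 (constants depending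
  on the class) in the first Taylor coefficients x, y, u of h.  The first two steps of the Schur algorithm give |x| <= 1,
  |y| <= 1 - |x|^2 and |(1 - |x|^2) u + conj x y^2| <= (1 - |x|^2)^2 - |y|^2, which reduce the
  estimate |H| <= a to a polynomial inequality in s = |x| on [0, 1]; it holds as soon as
  0 <= b <= 2 c, c <= a and 2 b <= a + 2 c.  Equality holds for h = 1, i.e. for
  p = (1 + z^2)/(1 - z^2), which is realised by 2 artanh z - z, artanh z and z/(1 - z^2).
*)
theory Submission
  imports Defs
begin

unbundle no vec_syntax \<comment> \<open>\<open>$\<close> is \<open>fps_nth\<close> throughout\<close>

section \<open>Taylor coefficients\<close>

lemma fps_expansion_nth_0 [simp]: "fps_expansion f 0 $ n = tcoeff f n"
  by (simp add: fps_expansion_def tcoeff_def)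

lemma tcoeff_eq_fps_nth: "f has_fps_expansion F \<Longrightarrow> tcoeff f n = F $ n"
  by (simp add: tcoeff_def fps_nth_fps_expansion)

lemma tcoeff_0 [simp]: "tcoeff f 0 = f 0"
  by (simp add: tcoeff_def)

lemma tcoeff_Suc_0: "tcoeff f (Suc 0) = deriv f 0"
  by (simp add: tcoeff_def)

lemma tcoeff_deriv: "tcoeff (deriv f) n = of_nat (Suc n) * tcoeff f (Suc n)"
proof -
  have "(fact (Suc n) :: complex) = of_nat (Suc n) * fact n" by (rule fact_Suc)
  then show ?thesis by (simp add: tcoeff_def funpow_Suc_right del: funpow.simps fact_Suc of_nat_Suc)
qed

lemma tcoeff_cong_ball:
  assumes "0 < r" "\<And>z. z \<in> ball 0 r \<Longrightarrow> f z = g z"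
  shows "tcoeff f n = tcoeff g n"
proof -
  have "eventually (\<lambda>z. f z = g z) (nhds 0)"
    using eventually_nhds_in_open[of "ball 0 r" 0] assms by (auto elim!: eventually_mono)
  then show ?thesis by (simp add: tcoeff_def higher_deriv_cong_ev)
qed

lemma has_fps_expansion_disc:
  "f holomorphic_on ball 0 1 \<Longrightarrow> f has_fps_expansion fps_expansion f 0"
  by (rule has_fps_expansion_fps_expansion[OF open_ball]) simp_all

lemma fps_mult_eq_on_ball:
  fixes f g h :: "complex \<Rightarrow> complex"
  assumes "f has_fps_expansion F" "g has_fps_expansion G" "h has_fps_expansion H"
    and "0 < r" "\<And>z. z \<in> ball 0 r \<Longrightarrow> f z * g z = h z"
  shows "F * G = H"
proof -
  have "eventually (\<lambda>z. f z * g z = h z) (nhds 0)"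
    using eventually_nhds_in_open[of "ball 0 r" 0] assms(4,5) by (auto elim!: eventually_mono)
  from has_fps_expansion_cong[OF this refl] have "h has_fps_expansion F * G"
    using has_fps_expansion_mult[OF assms(1,2)] by simp
  then show ?thesis using fps_expansion_unique_complex assms(3) by blast
qed

lemmas fps_mult_nth_small = fps_mult_nth atLeast0AtMost eval_nat_numeral

text \<open>\<open>f z / z\<close> with the removable singularity at \<open>0\<close> filled in;
  only meaningful when \<open>f 0 = 0\<close>.\<close>
definition div_z :: "(complex \<Rightarrow> complex) \<Rightarrow> complex \<Rightarrow> complex" where
  "div_z f z = (if z = 0 then deriv f 0 else f z / z)"

lemma
  fixes f :: "complex \<Rightarrow> complex"
  assumes hol: "f holomorphic_on ball 0 1" and f0: "f 0 = 0"
  shows holomorphic_div_z: "div_z f holomorphic_on ball 0 1"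
    and mult_div_z: "z * div_z f z = f z"
    and tcoeff_div_z: "tcoeff (div_z f) n = tcoeff f (Suc n)"
proof -
  have "div_z f = (\<lambda>z. if z = 0 then deriv f 0 else (f z - f 0) / (z - 0))"
    by (auto simp: div_z_def f0 fun_eq_iff)
  then show hol_div: "div_z f holomorphic_on ball 0 1"
    using pole_lemma_open[OF hol open_ball, of 0] by simp
  show "z * div_z f z = f z" for z
    by (simp add: div_z_def f0)
  have "fps_X * fps_expansion (div_z f) 0 = fps_expansion f 0"
    by (rule fps_mult_eq_on_ball[OF has_fps_expansion_fps_X has_fps_expansion_disc[OF hol_div]
          has_fps_expansion_disc[OF hol], of 1]) (simp_all add: div_z_def f0)
  then show "tcoeff (div_z f) n = tcoeff f (Suc n)"
    by (metis fps_X_mult_nth fps_expansion_nth_0 diff_Suc_1 nat.distinct(1))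
qed

section \<open>Holomorphic self-maps of the disc\<close>

lemma disc_self_map_cases:
  fixes h :: "complex \<Rightarrow> complex"
  assumes hol: "h holomorphic_on ball 0 1" and bd: "\<And>z. z \<in> ball 0 1 \<Longrightarrow> norm (h z) \<le> 1"
  obtains c where "norm c = 1" "\<And>z. z \<in> ball 0 1 \<Longrightarrow> h z = c"
    | "\<And>z. z \<in> ball 0 1 \<Longrightarrow> norm (h z) < 1"
proof (cases "\<exists>w\<in>ball 0 1. norm (h w) = 1")
  case True
  then obtain w where w: "w \<in> ball 0 1" "norm (h w) = 1" by blast
  have "h constant_on ball 0 1"
    by (rule maximum_modulus_principle[OF hol open_ball connected_ball open_ball subset_refl w(1)])
       (use bd w(2) in auto)
  then obtain c where "\<And>z. z \<in> ball 0 1 \<Longrightarrow> h z = c" by (auto simp: constant_on_def)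
  with w that(1) show ?thesis by metis
next
  case False
  with bd that(2) show ?thesis by (meson order_le_neq_trans)
qed

lemma tcoeff_const_on_disc:
  assumes "\<And>z. z \<in> ball 0 1 \<Longrightarrow> h z = c"
  shows "tcoeff h (Suc n) = 0"
proof -
  have "tcoeff h (Suc n) = tcoeff (\<lambda>_. c) (Suc n)"
    using assms by (intro tcoeff_cong_ball) auto
  also have "\<dots> = fps_const c $ Suc n"
    by (rule tcoeff_eq_fps_nth[OF has_fps_expansion_const])
  finally show ?thesis by simp
qed

lemma norm_div_z_le_1:
  fixes h :: "complex \<Rightarrow> complex"
  assumes hol: "h holomorphic_on ball 0 1" and h0: "h 0 = 0"
    and bd: "\<And>z. z \<in> ball 0 1 \<Longrightarrow> norm (h z) \<le> 1" and z: "z \<in> ball 0 1"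
  shows "norm (div_z h z) \<le> 1"
proof (rule disc_self_map_cases[OF hol bd])
  fix c assume "norm c = 1" "\<And>z. z \<in> ball 0 1 \<Longrightarrow> h z = c"
  then show ?thesis using h0 by (metis centre_in_ball norm_zero zero_less_one zero_neq_one)
next
  assume "\<And>z. z \<in> ball 0 1 \<Longrightarrow> norm (h z) < 1"
  then have "norm (h w) < 1" if "norm w < 1" for w using that by simp
  note schwarz = Schwarz_Lemma[OF hol h0 this]
  show ?thesis
  proof (cases "z = 0")
    case True
    then show ?thesis using schwarz(2)[of 0] by (simp add: div_z_def)
  next
    case False
    then show ?thesis using schwarz(1)[of z] z by (simp add: div_z_def norm_divide divide_le_eq_1)
  qed
qed

lemma moebius_disc:
  fixes a w :: complex
  assumes "norm a < 1" "norm w < 1"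
  shows "1 - cnj a * w \<noteq> 0" "norm ((w - a) / (1 - cnj a * w)) < 1"
proof -
  have "(norm (1 - cnj a * w))^2 - (norm (w - a))^2 = (1 - (norm a)^2) * (1 - (norm w)^2)"
    unfolding cmod_power2 by (simp add: algebra_simps power2_eq_square)
  moreover have "(1 - (norm a)^2) * (1 - (norm w)^2) > 0"
    using assms by (intro mult_pos_pos) (auto simp: abs_square_less_1)
  ultimately have lt: "(norm (w - a))^2 < (norm (1 - cnj a * w))^2" by linarith
  then show nz: "1 - cnj a * w \<noteq> 0" by auto
  have "norm (w - a) < norm (1 - cnj a * w)" using lt by (simp add: power_less_imp_less_base)
  then show "norm ((w - a) / (1 - cnj a * w)) < 1" using nz by (simp add: norm_divide divide_less_eq_1)
qed

lemma moebius_comp_coeffs: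
  fixes h :: "complex \<Rightarrow> complex"
  assumes hol: "h holomorphic_on ball 0 1" and bd: "\<And>z. z \<in> ball 0 1 \<Longrightarrow> norm (h z) < 1"
  defines "m \<equiv> \<lambda>z. (h z - h 0) / (1 - cnj (h 0) * h z)"
  shows "m holomorphic_on ball 0 1" "\<And>z. z \<in> ball 0 1 \<Longrightarrow> norm (m z) < 1" "m 0 = 0"
    "tcoeff h 1 = of_real (1 - (norm (h 0))^2) * tcoeff m 1"
    "tcoeff h 2 = of_real (1 - (norm (h 0))^2) * tcoeff m 2 - cnj (h 0) * tcoeff h 1 * tcoeff m 1"
proof -
  have h0: "norm (h 0) < 1" using bd[of 0] by simp
  note moeb = moebius_disc[OF h0 bd]
  show hol_m: "m holomorphic_on ball 0 1"
    unfolding m_def using hol moeb(1) by (intro holomorphic_intros) auto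
  show "norm (m z) < 1" if "z \<in> ball 0 1" for z using moeb(2)[OF that] by (simp add: m_def)
  show m0: "m 0 = 0" by (simp add: m_def)
  define H where "H = fps_expansion h 0"
  define M where "M = fps_expansion m 0"
  have EH: "h has_fps_expansion H" unfolding H_def by (rule has_fps_expansion_disc[OF hol])
  have "M * (1 - fps_const (cnj (h 0)) * H) = H - fps_const (h 0)"
  proof (rule fps_mult_eq_on_ball[OF _ _ _ zero_less_one])
    show "m has_fps_expansion M" unfolding M_def by (rule has_fps_expansion_disc[OF hol_m])
    show "(\<lambda>z. 1 - cnj (h 0) * h z) has_fps_expansion 1 - fps_const (cnj (h 0)) * H"
      "(\<lambda>z. h z - h 0) has_fps_expansion H - fps_const (h 0)"
      by (intro fps_expansion_intros EH)+
    show "m z * (1 - cnj (h 0) * h z) = h z - h 0" if "z \<in> ball 0 1" for z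
      using moeb(1)[OF that] by (simp add: m_def)
  qed
  then have k: "(M * (1 - fps_const (cnj (h 0)) * H)) $ k = (H - fps_const (h 0)) $ k" for k
    by simp
  have d: "of_real (1 - (norm (h 0))^2) = 1 - cnj (h 0) * h 0"
    using complex_norm_square[of "h 0"] by (simp add: mult.commute)
  from k[of 1] k[of 2] show
    "tcoeff h 1 = of_real (1 - (norm (h 0))^2) * tcoeff m 1"
    "tcoeff h 2 = of_real (1 - (norm (h 0))^2) * tcoeff m 2 - cnj (h 0) * tcoeff h 1 * tcoeff m 1"
    unfolding d by (simp_all add: fps_mult_nth_small H_def M_def m0 algebra_simps)
qed

lemma schwarz_pick_origin:
  fixes h :: "complex \<Rightarrow> complex"
  assumes hol: "h holomorphic_on ball 0 1" and bd: "\<And>z. z \<in> ball 0 1 \<Longrightarrow> norm (h z) \<le> 1"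
  shows "norm (tcoeff h 1) \<le> 1 - (norm (h 0))^2"
proof (rule disc_self_map_cases[OF hol bd])
  fix c assume "norm c = 1" "\<And>z. z \<in> ball 0 1 \<Longrightarrow> h z = c"
  then show ?thesis using tcoeff_const_on_disc[of h c 0] by simp
next
  assume "\<And>z. z \<in> ball 0 1 \<Longrightarrow> norm (h z) < 1"
  from moebius_comp_coeffs[OF hol this] obtain m where
    m: "m holomorphic_on ball 0 1" "\<And>z. z \<in> ball 0 1 \<Longrightarrow> norm (m z) < 1" "m 0 = 0"
      "tcoeff h 1 = of_real (1 - (norm (h 0))^2) * tcoeff m 1"
    by blast
  have "norm (tcoeff m 1) \<le> 1"
    using Schwarz_Lemma(2)[OF m(1,3), of 0] m(2) by (simp add: tcoeff_Suc_0)
  moreover have "0 \<le> 1 - (norm (h 0))^2"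
    using bd[of 0] by (simp add: abs_square_le_1)
  ultimately show ?thesis
    unfolding m(4) norm_mult norm_of_real by (simp add: mult_left_le)
qed

text \<open>Necessary conditions on the first three Taylor coefficients of a holomorphic map of the disc
  into the closed disc, from the first two steps of the Schur algorithm.\<close>
definition schur_coeffs :: "complex \<Rightarrow> complex \<Rightarrow> complex \<Rightarrow> bool" where
  "schur_coeffs c0 c1 c2 \<longleftrightarrow> norm c0 \<le> 1 \<and> norm c1 \<le> 1 - (norm c0)^2 \<and>
     norm (of_real (1 - (norm c0)^2) * c2 + cnj c0 * c1^2) \<le> (1 - (norm c0)^2)^2 - (norm c1)^2 \<and>
     (norm c0 = 1 \<longrightarrow> c2 = 0)"

lemma self_map_schur_coeffs:
  fixes h :: "complex \<Rightarrow> complex"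
  assumes hol: "h holomorphic_on ball 0 1" and bd: "\<And>z. z \<in> ball 0 1 \<Longrightarrow> norm (h z) \<le> 1"
  shows "schur_coeffs (tcoeff h 0) (tcoeff h 1) (tcoeff h 2)"
proof (rule disc_self_map_cases[OF hol bd])
  fix c assume "norm c = 1" "\<And>z. z \<in> ball 0 1 \<Longrightarrow> h z = c"
  then show ?thesis
    using tcoeff_const_on_disc[of h c 0] tcoeff_const_on_disc[of h c 1]
    by (simp add: schur_coeffs_def numeral_2_eq_2)
next
  assume strict: "\<And>z. z \<in> ball 0 1 \<Longrightarrow> norm (h z) < 1"
  define m where "m = (\<lambda>z. (h z - h 0) / (1 - cnj (h 0) * h z))"
  define d where "d = 1 - (norm (h 0))^2"
  have m: "m holomorphic_on ball 0 1" "\<And>z. z \<in> ball 0 1 \<Longrightarrow> norm (m z) \<le> 1" "m 0 = 0"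
    "tcoeff h 1 = of_real d * tcoeff m 1"
    "tcoeff h 2 = of_real d * tcoeff m 2 - cnj (h 0) * tcoeff h 1 * tcoeff m 1"
    using moebius_comp_coeffs[OF hol strict] less_imp_le unfolding m_def d_def by blast+
  have d: "0 < d" using strict[of 0] by (simp add: d_def abs_square_less_1)
  \<comment> \<open>\<open>div_z m\<close> is the Schur transform of \<open>h\<close>\<close>
  have k: "div_z m holomorphic_on ball 0 1" "\<And>z. z \<in> ball 0 1 \<Longrightarrow> norm (div_z m z) \<le> 1"
    using holomorphic_div_z[OF m(1,3)] norm_div_z_le_1[OF m(1,3,2)] by auto
  have m1: "norm (tcoeff m 1) \<le> 1"
    using k(2)[of 0] tcoeff_div_z[OF m(1,3), of 0] by simp
  have m2: "norm (tcoeff m 2) \<le> 1 - (norm (tcoeff m 1))^2"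
    using schwarz_pick_origin[OF k] tcoeff_div_z[OF m(1,3), of 0] tcoeff_div_z[OF m(1,3), of 1]
    by (simp add: numeral_2_eq_2)
  have "of_real d * tcoeff h 2 + cnj (h 0) * (tcoeff h 1)^2 = (of_real d)^2 * tcoeff m 2"
    unfolding m(5) m(4) by (simp add: algebra_simps power2_eq_square)
  then have "norm (of_real d * tcoeff h 2 + cnj (h 0) * (tcoeff h 1)^2) = d^2 * norm (tcoeff m 2)"
    using d by (simp add: norm_mult norm_power)
  also have "\<dots> \<le> d^2 * (1 - (norm (tcoeff m 1))^2)"
    using m2 by (intro mult_left_mono) auto
  also have "\<dots> = d^2 - (norm (tcoeff h 1))^2"
    unfolding m(4) using d by (simp add: norm_mult algebra_simps)
  finally have "norm (of_real d * tcoeff h 2 + cnj (h 0) * (tcoeff h 1)^2) \<le> d^2 - (norm (tcoeff h 1))^2" .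
  moreover have "norm (tcoeff h 1) \<le> d"
    unfolding m(4) using d m1 by (simp add: norm_mult abs_of_pos mult_left_le)
  ultimately show ?thesis
    using strict[of 0] unfolding schur_coeffs_def tcoeff_0 d_def[symmetric] by simp
qed

section \<open>Caratheodory functions\<close>

definition caratheodory :: "(complex \<Rightarrow> complex) \<Rightarrow> bool" where
  "caratheodory p \<longleftrightarrow> p holomorphic_on ball 0 1 \<and> p 0 = 1 \<and> (\<forall>z\<in>ball 0 1. 0 < Re (p z))"

lemma cayley_disc:
  fixes p :: complex
  assumes "0 < Re p"
  shows "p + 1 \<noteq> 0" "norm ((p - 1) / (p + 1)) < 1"
proof -
  have "(norm (p + 1))^2 - (norm (p - 1))^2 = 4 * Re p"
    unfolding cmod_power2 by (simp add: algebra_simps power2_eq_square)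
  then have lt: "(norm (p - 1))^2 < (norm (p + 1))^2" using assms by linarith
  then show nz: "p + 1 \<noteq> 0" by auto
  have "norm (p - 1) < norm (p + 1)" using lt by (simp add: power_less_imp_less_base)
  then show "norm ((p - 1) / (p + 1)) < 1" using nz by (simp add: norm_divide divide_less_eq_1)
qed

lemma schwarz_double_zero_schur_coeffs:
  fixes \<omega> :: "complex \<Rightarrow> complex"
  assumes hol: "\<omega> holomorphic_on ball 0 1" and bd: "\<And>z. z \<in> ball 0 1 \<Longrightarrow> norm (\<omega> z) \<le> 1"
    and \<omega>0: "\<omega> 0 = 0" and \<omega>1: "deriv \<omega> 0 = 0"
  shows "schur_coeffs (tcoeff \<omega> 2) (tcoeff \<omega> 3) (tcoeff \<omega> 4)"
proof -
  define h where "h = div_z (div_z \<omega>)"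
  have hol1: "div_z \<omega> holomorphic_on ball 0 1" and h1_0: "div_z \<omega> 0 = 0"
    using holomorphic_div_z[OF hol \<omega>0] \<omega>1 by (simp_all add: div_z_def)
  have hol_h: "h holomorphic_on ball 0 1"
    unfolding h_def by (rule holomorphic_div_z[OF hol1 h1_0])
  have bd_h: "norm (h z) \<le> 1" if "z \<in> ball 0 1" for z
    unfolding h_def using norm_div_z_le_1[OF hol \<omega>0 bd] that by (rule norm_div_z_le_1[OF hol1 h1_0])
  have "tcoeff h n = tcoeff \<omega> (Suc (Suc n))" for n
    unfolding h_def by (simp add: tcoeff_div_z[OF hol1 h1_0] tcoeff_div_z[OF hol \<omega>0])
  with self_map_schur_coeffs[OF hol_h bd_h] show ?thesis
    by (simp add: eval_nat_numeral del: tcoeff_0)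
qed

lemma caratheodory_schur_coeffs:
  assumes p: "caratheodory p" and p1: "tcoeff p 1 = 0"
  obtains x y u where "schur_coeffs x y u"
    "tcoeff p 2 = 2 * x" "tcoeff p 3 = 2 * y" "tcoeff p 4 = 2 * u + 2 * x^2"
proof -
  have hol: "p holomorphic_on ball 0 1" and p0: "p 0 = 1"
    and re: "\<And>z. z \<in> ball 0 1 \<Longrightarrow> 0 < Re (p z)"
    using p by (auto simp: caratheodory_def)
  define \<omega> where "\<omega> = (\<lambda>z. (p z - 1) / (p z + 1))"
  have nz: "p z + 1 \<noteq> 0" and bd: "norm (\<omega> z) < 1" if "z \<in> ball 0 1" for z
    using cayley_disc[OF re[OF that]] by (simp_all add: \<omega>_def)
  have hol_\<omega>: "\<omega> holomorphic_on ball 0 1"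
    unfolding \<omega>_def using hol nz by (intro holomorphic_intros) auto
  have \<omega>0: "\<omega> 0 = 0" by (simp add: \<omega>_def p0)
  define P where "P = fps_expansion p 0"
  define \<Omega> where "\<Omega> = fps_expansion \<omega> 0"
  have "\<Omega> * (P + 1) = P - 1"
  proof (rule fps_mult_eq_on_ball[OF _ _ _ zero_less_one])
    have EP: "p has_fps_expansion P" unfolding P_def by (rule has_fps_expansion_disc[OF hol])
    show "(\<lambda>z. p z + 1) has_fps_expansion P + 1" "(\<lambda>z. p z - 1) has_fps_expansion P - 1"
      by (intro fps_expansion_intros EP)+
    show "\<omega> has_fps_expansion \<Omega>" unfolding \<Omega>_def by (rule has_fps_expansion_disc[OF hol_\<omega>])
    show "\<omega> z * (p z + 1) = p z - 1" if "z \<in> ball 0 1" for z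
      using nz[OF that] by (simp add: \<omega>_def)
  qed
  then have k: "(\<Omega> * (P + 1)) $ n = (P - 1) $ n" for n by simp
  have \<omega>1: "deriv \<omega> 0 = 0"
    using k[of 1] p0 p1 \<omega>0 by (simp add: fps_mult_nth_small P_def \<Omega>_def tcoeff_Suc_0)
  show ?thesis
  proof (rule that[OF schwarz_double_zero_schur_coeffs[OF hol_\<omega> _ \<omega>0 \<omega>1]])
    show "norm (\<omega> z) \<le> 1" if "z \<in> ball 0 1" for z using bd[OF that] by simp
    have "tcoeff p 0 = 1" "tcoeff \<omega> 0 = 0" "tcoeff \<omega> 1 = 0"
      using p0 \<omega>0 \<omega>1 by (simp_all add: tcoeff_Suc_0)
    note coeffs = this p1
    show p2: "tcoeff p 2 = 2 * tcoeff \<omega> 2" "tcoeff p 3 = 2 * tcoeff \<omega> 3"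
      using k[of 2] k[of 3] coeffs by (simp_all add: fps_mult_nth_small P_def \<Omega>_def algebra_simps)
    show "tcoeff p 4 = 2 * tcoeff \<omega> 4 + 2 * (tcoeff \<omega> 2)^2"
      using k[of 4] p2(1) coeffs
      by (simp add: fps_mult_nth_small P_def \<Omega>_def power2_eq_square algebra_simps)
  qed
qed

lemma schur_cubic_real_le:
  fixes a b c s t :: real
  assumes s: "0 \<le> s" "s < 1" and t: "0 \<le> t" "t \<le> 1 - s^2"
    and abc: "0 \<le> b" "b \<le> 2 * c" "c \<le> a" "2 * b \<le> a + 2 * c"
  shows "a * (1 - s^2) * s^3 + b * s * ((1 - s^2)^2 - t^2 + s * t^2) + c * (1 - s^2) * t^2
    \<le> a * (1 - s^2)"
proof -
  define d where "d = 1 - s^2"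
  define \<kappa> where "\<kappa> = (1 - s) * (c * (1 + s) - b * s)"
  define \<beta> where "\<beta> = a * (1 + s + s^2) - b * s^2 * (1 + s) - c * (1 - s) * (1 + s)^2"
  have d: "0 \<le> d" using s by (simp add: d_def abs_square_le_1)
  have "b * s \<le> 2 * c * s" "c * s \<le> c" using abc s by (auto intro: mult_right_mono mult_left_le)
  then have "b * s \<le> c * (1 + s)" by (simp add: algebra_simps)
  then have \<kappa>: "0 \<le> \<kappa>" using s unfolding \<kappa>_def by simp
  have \<beta>: "0 \<le> \<beta>"
  proof (cases "b \<le> c")
    case True
    have "\<beta> = (a - c) * (1 + s) + (a - b + c) * s^2 + (c - b) * s^3"
      by (simp add: \<beta>_def algebra_simps power2_eq_square power3_eq_cube)
    then show ?thesis using True abc s by simp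
  next
    case False
    have "\<beta> = (a - c) * (1 + s) + (a - 2 * b + 2 * c) * s^2 + (b - c) * s^2 * (1 - s)"
      by (simp add: \<beta>_def algebra_simps power2_eq_square power3_eq_cube)
    then show ?thesis using False abc s by simp
  qed
  have "t^2 \<le> d^2" using t by (intro power_mono) (auto simp: d_def)
  have "a * (1 - s^2) * s^3 + b * s * ((1 - s^2)^2 - t^2 + s * t^2) + c * (1 - s^2) * t^2
      = a * d * s^3 + b * s * d^2 + \<kappa> * t^2"
    by (simp add: d_def \<kappa>_def algebra_simps power2_eq_square)
  also have "\<dots> \<le> a * d * s^3 + b * s * d^2 + \<kappa> * d^2"
    using \<kappa> \<open>t^2 \<le> d^2\<close> by (simp add: mult_left_mono)
  also have "\<dots> = a * d - d * (1 - s) * \<beta>"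
    by (simp add: d_def \<kappa>_def \<beta>_def algebra_simps power2_eq_square power3_eq_cube)
  also have "\<dots> \<le> a * d" using d s \<beta> by simp
  finally show ?thesis by (simp add: d_def)
qed

lemma schur_coeffs_cubic_le:
  fixes x y u :: complex and a b c :: real
  assumes xyu: "schur_coeffs x y u"
    and abc: "0 \<le> b" "b \<le> 2 * c" "c \<le> a" "2 * b \<le> a + 2 * c"
  shows "norm (of_real b * x * u - of_real a * x^3 - of_real c * y^2) \<le> a"
proof (cases "norm x = 1")
  case True
  then have "y = 0" "u = 0" using xyu by (auto simp: schur_coeffs_def)
  then show ?thesis using True abc by (simp add: norm_mult norm_power)
next
  case False
  define s where "s = norm x"
  define t where "t = norm y"
  define d where "d = 1 - s^2"
  have s: "0 \<le> s" "s < 1" using xyu False by (auto simp: schur_coeffs_def s_def)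
  have t: "0 \<le> t" "t \<le> 1 - s^2" using xyu by (auto simp: schur_coeffs_def s_def t_def)
  have d: "0 < d" using s by (simp add: d_def abs_square_less_1)
  have du: "norm (of_real d * u) \<le> d^2 - t^2 + s * t^2"
  proof -
    have "norm (of_real d * u) \<le> norm (of_real d * u + cnj x * y^2) + norm (cnj x * y^2)"
      using norm_triangle_ineq4[of "of_real d * u + cnj x * y^2" "cnj x * y^2"] by simp
    also have "\<dots> \<le> d^2 - t^2 + s * t^2"
      using xyu by (simp add: schur_coeffs_def norm_mult norm_power s_def t_def d_def)
    finally show ?thesis .
  qed
  have tri: "norm (v - w - q) \<le> norm v + norm w + norm q" for v w q :: complex
    using norm_triangle_ineq4[of "v - w" q] norm_triangle_ineq4[of v w] by linarith
  have "of_real d * (of_real b * x * u - of_real a * x^3 - of_real c * y^2)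
      = of_real b * x * (of_real d * u) - of_real (a * d) * x^3 - of_real (c * d) * y^2"
    by (simp add: algebra_simps)
  then have "d * norm (of_real b * x * u - of_real a * x^3 - of_real c * y^2)
      = norm (of_real b * x * (of_real d * u) - of_real (a * d) * x^3 - of_real (c * d) * y^2)"
    using d by (metis abs_of_pos norm_mult norm_of_real)
  also have "\<dots> \<le> norm (of_real b * x * (of_real d * u)) + norm (of_real (a * d) * x^3)
      + norm (of_real (c * d) * y^2)"
    by (rule tri)
  also have "\<dots> = b * s * norm (of_real d * u) + a * d * s^3 + c * d * t^2"
    using abc d by (simp add: norm_mult norm_power s_def t_def)
  also have "\<dots> \<le> b * s * (d^2 - t^2 + s * t^2) + a * d * s^3 + c * d * t^2"
    using du abc s by (simp add: mult_left_mono)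
  also have "\<dots> \<le> a * d"
    using schur_cubic_real_le[OF s t abc] by (simp add: d_def algebra_simps)
  finally show ?thesis using d by (simp add: mult.commute)
qed

section \<open>Coefficients of the inverse function\<close>

lemma fps_compose_inverse_coeffs:
  fixes F G :: "complex fps"
  assumes FG: "F oo G = fps_X" and G0: "G $ 0 = 0"
    and F: "F $ 0 = 0" "F $ 1 = 1" "F $ 2 = 0"
  shows "G $ 3 = - F $ 3" "G $ 4 = - F $ 4" "G $ 5 = 3 * (F $ 3)^2 - F $ 5"
proof -
  note sums = fps_compose_nth atLeast0AtMost eval_nat_numeral
  have e: "(F oo G) $ n = fps_X $ n" for n using FG by simp
  have diag: "(G^k) $ k = (G $ 1)^k" for k using startsby_zero_power_nth_same[OF G0] by simp
  have below: "(G^k) $ j = 0" if "j < k" for j k using startsby_zero_power_prefix[OF G0] that by simp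
  have G1: "G $ 1 = 1" using e[of 1] F G0 diag below by (simp add: sums del: power.simps)
  have G2: "G $ 2 = 0" using e[of 2] F G0 diag below by (simp add: sums del: power.simps)
  have sq: "(G^2) $ 3 = 0" "(G^2) $ 4 = 2 * G $ 3"
    using G0 G1 G2 by (simp_all add: power2_eq_square fps_mult_nth_small)
  have cube: "(G^3) $ 4 = 0" "(G^3) $ 5 = 3 * G $ 3"
    unfolding power_Suc2[of G 2] numeral_3_eq_3[symmetric]
    using sq G0 G1 G2 diag[of 2] below[of _ 2] by (simp_all add: fps_mult_nth_small)
  have quart: "(G^4) $ 5 = 0"
    unfolding power_Suc2[of G 3] using cube diag[of 3] below[of _ 3] G0 G1 G2
    by (simp add: fps_mult_nth_small)
  show G3: "G $ 3 = - F $ 3"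
    using e[of 3] F G0 G1 G2 diag below by (simp add: sums eq_neg_iff_add_eq_0 del: power.simps)
  show "G $ 4 = - F $ 4"
    using e[of 4] F G0 G1 G2 diag below cube by (simp add: sums eq_neg_iff_add_eq_0 del: power.simps)
  have "G $ 5 + F $ 3 * (3 * G $ 3) + F $ 5 = 0"
    using e[of 5] F G0 G1 G2 diag below cube quart by (simp add: sums del: power.simps)
  then show "G $ 5 = 3 * (F $ 3)^2 - F $ 5"
    using G3 by (simp add: algebra_simps power2_eq_square)
qed

text \<open>\<open>A\<^sub>3 A\<^sub>5 - A\<^sub>4\<^sup>2\<close> for the inverse, expressed through the coefficients of \<open>f\<close>
  when \<open>a\<^sub>2 = 0\<close>.\<close>
definition inverse_hankel23 :: "(complex \<Rightarrow> complex) \<Rightarrow> complex" where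
  "inverse_hankel23 f = tcoeff f 3 * tcoeff f 5 - 3 * (tcoeff f 3)^3 - (tcoeff f 4)^2"

lemma hankel23_local_inverse:
  assumes f: "normalized_analytic f" and a2: "tcoeff f 2 = 0" and g: "local_inverse f g S"
  shows "hankel23 g = inverse_hankel23 f"
proof -
  have hol: "f holomorphic_on ball 0 1" and f0: "f 0 = 0" and f1: "deriv f 0 = 1"
    using f by (auto simp: normalized_analytic_def)
  have S: "open S" "0 \<in> S" "g holomorphic_on S" "g 0 = 0" "\<And>w. w \<in> S \<Longrightarrow> f (g w) = w"
    using g by (auto simp: local_inverse_def)
  define F where "F = fps_expansion f 0"
  define G where "G = fps_expansion g 0"
  have EF: "f has_fps_expansion F" unfolding F_def by (rule has_fps_expansion_disc[OF hol])
  have EG: "g has_fps_expansion G" unfolding G_def by (rule has_fps_expansion_fps_expansion[OF S(1-3)])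
  have G0: "G $ 0 = 0" using S(4) by (simp add: G_def)
  have "eventually (\<lambda>w. (f \<circ> g) w = w) (nhds 0)"
    using eventually_nhds_in_open[OF S(1,2)] by (auto elim!: eventually_mono simp: S(5))
  then have "(f \<circ> g) has_fps_expansion fps_X"
    using has_fps_expansion_cong[where g = "\<lambda>w. w", OF _ refl] has_fps_expansion_fps_X by blast
  then have FG: "F oo G = fps_X"
    using fps_expansion_unique_complex has_fps_expansion_compose[OF EF EG G0] by blast
  have "F $ 0 = 0" "F $ 1 = 1" "F $ 2 = 0" using f0 f1 a2 by (simp_all add: F_def tcoeff_Suc_0)
  note A = fps_compose_inverse_coeffs[OF FG G0 this]
  have "hankel23 g = G $ 3 * G $ 5 - (G $ 4)^2" by (simp add: hankel23_def G_def)
  also have "\<dots> = inverse_hankel23 f"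
    unfolding A by (simp add: inverse_hankel23_def F_def algebra_simps power2_eq_square power3_eq_cube)
  finally show ?thesis .
qed

lemma local_inverse_exists:
  assumes "normalized_analytic f"
  obtains g S where "local_inverse f g S"
proof -
  have hol: "f holomorphic_on ball 0 1" and f0: "f 0 = 0" and f1: "deriv f 0 = 1"
    using assms by (auto simp: normalized_analytic_def)
  obtain r where r: "0 < r" "ball 0 r \<subseteq> ball (0::complex) 1" "open (f ` ball 0 r)" "inj_on f (ball 0 r)"
    using has_complex_derivative_locally_invertible[OF hol _ open_ball, of 0] f1 by auto
  obtain g where g: "g holomorphic_on f ` ball 0 r" "\<And>z. z \<in> ball 0 r \<Longrightarrow> g (f z) = z"
    using holomorphic_has_inverse[OF holomorphic_on_subset[OF hol r(2)] open_ball r(4)] by metis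
  have "local_inverse f g (f ` ball 0 r)"
    unfolding local_inverse_def
  proof (intro conjI ballI)
    show "0 \<in> f ` ball 0 r" using r(1) f0 by (metis centre_in_ball image_eqI)
    show "g 0 = 0" using g(2)[of 0] r(1) f0 by simp
    show "g ` f ` ball 0 r \<subseteq> ball 0 1" using g(2) r(2) by auto
    show "f (g w) = w" if "w \<in> f ` ball 0 r" for w using g(2) that by auto
  qed (use r g in auto)
  then show ?thesis by (rule that)
qed

section \<open>The four classes\<close>

lemma tcoeff_z_mult:
  assumes "f holomorphic_on ball 0 1"
  shows "tcoeff (\<lambda>z. z * f z) (Suc n) = tcoeff f n"
proof -
  have "(\<lambda>z. z * f z) has_fps_expansion fps_X * fps_expansion f 0"
    by (intro fps_expansion_intros has_fps_expansion_disc[OF assms])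
  then show ?thesis by (simp add: tcoeff_eq_fps_nth)
qed

lemma tcoeff_odd_part:
  assumes "f holomorphic_on ball 0 1"
  shows "tcoeff (\<lambda>z. (f z - f (- z)) / 2) n = (if odd n then tcoeff f n else 0)"
proof -
  define F where "F = fps_expansion f 0"
  have EF: "f has_fps_expansion F" unfolding F_def by (rule has_fps_expansion_disc[OF assms])
  have "(f \<circ> uminus) has_fps_expansion (F oo - fps_X)"
    by (intro has_fps_expansion_compose EF fps_expansion_intros) simp
  then have "(\<lambda>z. (f z - f (- z)) * (1 / 2)) has_fps_expansion (F - (F oo - fps_X)) * fps_const (1 / 2)"
    by (intro fps_expansion_intros EF) (simp add: comp_def)
  then show ?thesis
    by (auto simp: tcoeff_eq_fps_nth fps_compose_uminus' F_def field_simps)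
qed

lemma bounded_turning_caratheodory:
  assumes "bounded_turning f"
  shows "caratheodory (deriv f)"
  using assms holomorphic_deriv[OF _ open_ball]
  by (auto simp: bounded_turning_def normalized_analytic_def caratheodory_def)

lemma bounded_turning_inverse_hankel23_le:
  assumes f: "bounded_turning f" and a2: "tcoeff f 2 = 0"
  shows "norm (inverse_hankel23 f) \<le> 28/45"
proof -
  have p: "tcoeff (deriv f) 1 = 0" "tcoeff (deriv f) 2 = 3 * tcoeff f 3"
    "tcoeff (deriv f) 3 = 4 * tcoeff f 4" "tcoeff (deriv f) 4 = 5 * tcoeff f 5"
    using a2 by (simp_all add: tcoeff_deriv eval_nat_numeral)
  obtain x y u where xyu: "schur_coeffs x y u"
    and c: "tcoeff (deriv f) 2 = 2 * x" "tcoeff (deriv f) 3 = 2 * y" "tcoeff (deriv f) 4 = 2 * u + 2 * x^2"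
    using caratheodory_schur_coeffs[OF bounded_turning_caratheodory[OF f] p(1)] by blast
  have "inverse_hankel23 f = 4/15 * x * u - 28/45 * x^3 - 1/4 * y^2"
    using p c unfolding inverse_hankel23_def by algebra
  with schur_coeffs_cubic_le[OF xyu, of "4/15" "1/4" "28/45"] show ?thesis by simp
qed

lemma caratheodory_deriv_div_z:
  fixes f \<phi> :: "complex \<Rightarrow> complex"
  assumes hol_f: "f holomorphic_on ball 0 1" and f1: "deriv f 0 = 1"
    and hol_\<phi>: "\<phi> holomorphic_on ball 0 1" and \<phi>0: "\<phi> 0 = 0" and \<phi>1: "deriv \<phi> 0 = 1"
    and re: "\<And>z. z \<in> ball 0 1 - {0} \<Longrightarrow> \<phi> z \<noteq> 0 \<and> 0 < Re (z * deriv f z / \<phi> z)"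
  shows "caratheodory (\<lambda>z. deriv f z / div_z \<phi> z)"
  unfolding caratheodory_def
proof (intro conjI ballI)
  have nz: "div_z \<phi> z \<noteq> 0" if "z \<in> ball 0 1" for z
    using re[of z] \<phi>1 that by (auto simp: div_z_def)
  show "(\<lambda>z. deriv f z / div_z \<phi> z) holomorphic_on ball 0 1"
    using hol_f holomorphic_div_z[OF hol_\<phi> \<phi>0] nz by (intro holomorphic_intros) auto
  show "deriv f 0 / div_z \<phi> 0 = 1" using f1 \<phi>1 by (simp add: div_z_def)
  fix z :: complex assume z: "z \<in> ball 0 1"
  show "0 < Re (deriv f z / div_z \<phi> z)"
  proof (cases "z = 0")
    case True then show ?thesis using f1 \<phi>1 by (simp add: div_z_def)
  next
    case False
    then have "deriv f z / div_z \<phi> z = z * deriv f z / \<phi> z" using re[of z] z by (simp add: div_z_def)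
    then show ?thesis using re[of z] z False by simp
  qed
qed

lemma quotient_caratheodory:
  fixes f \<phi> :: "complex \<Rightarrow> complex"
  assumes hol_f: "f holomorphic_on ball 0 1" and f1: "deriv f 0 = 1" and f2: "tcoeff f 2 = 0"
    and hol_\<phi>: "\<phi> holomorphic_on ball 0 1" and \<phi>0: "\<phi> 0 = 0" and \<phi>1: "deriv \<phi> 0 = 1"
    and \<phi>2: "tcoeff \<phi> 2 = 0"
    and re: "\<And>z. z \<in> ball 0 1 - {0} \<Longrightarrow> \<phi> z \<noteq> 0 \<and> 0 < Re (z * deriv f z / \<phi> z)"
  obtains p where "caratheodory p" "tcoeff p 1 = 0"
    "tcoeff p 2 = 3 * tcoeff f 3 - tcoeff \<phi> 3" "tcoeff p 3 = 4 * tcoeff f 4 - tcoeff \<phi> 4"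
    "tcoeff p 4 = 5 * tcoeff f 5 - tcoeff \<phi> 5 - (3 * tcoeff f 3 - tcoeff \<phi> 3) * tcoeff \<phi> 3"
proof -
  define n where "n = div_z \<phi>"
  define p where "p = (\<lambda>z. deriv f z / n z)"
  have p: "caratheodory p"
    unfolding p_def n_def by (rule caratheodory_deriv_div_z[OF hol_f f1 hol_\<phi> \<phi>0 \<phi>1 re])
  have hol_n: "n holomorphic_on ball 0 1" and tn: "\<And>k. tcoeff n k = tcoeff \<phi> (Suc k)"
    unfolding n_def using holomorphic_div_z tcoeff_div_z hol_\<phi> \<phi>0 by blast+
  have nz: "n z \<noteq> 0" if "z \<in> ball 0 1" for z
    using re[of z] \<phi>1 that by (auto simp: n_def div_z_def)
  define P where "P = fps_expansion p 0"
  define N where "N = fps_expansion n 0"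
  define D where "D = fps_deriv (fps_expansion f 0)"
  have "P * N = D"
  proof (rule fps_mult_eq_on_ball[OF _ _ _ zero_less_one])
    show "p has_fps_expansion P"
      unfolding P_def using p by (intro has_fps_expansion_disc) (simp add: caratheodory_def)
    show "n has_fps_expansion N" unfolding N_def by (rule has_fps_expansion_disc[OF hol_n])
    show "deriv f has_fps_expansion D"
      unfolding D_def by (intro fps_expansion_intros has_fps_expansion_disc[OF hol_f])
    show "p z * n z = deriv f z" if "z \<in> ball 0 1" for z using nz[OF that] by (simp add: p_def)
  qed
  then have k: "(P * N) $ j = D $ j" for j by simp
  have "tcoeff p 0 = 1" "tcoeff \<phi> 1 = 1" "tcoeff \<phi> 2 = 0" "tcoeff f 1 = 1" "tcoeff f 2 = 0"
    using p \<phi>1 \<phi>2 f1 f2 by (simp_all add: caratheodory_def tcoeff_Suc_0)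
  note coeffs = this tn
  have p1: "tcoeff p 1 = 0"
    using k[of 1] coeffs by (simp add: P_def N_def D_def fps_mult_nth_small)
  have p2: "tcoeff p 2 = 3 * tcoeff f 3 - tcoeff \<phi> 3"
    using k[of 2] p1 coeffs by (simp add: P_def N_def D_def fps_mult_nth_small algebra_simps)
  have p3: "tcoeff p 3 = 4 * tcoeff f 4 - tcoeff \<phi> 4"
    using k[of 3] p1 coeffs by (simp add: P_def N_def D_def fps_mult_nth_small algebra_simps)
  have "tcoeff \<phi> 5 + (3 * tcoeff f 3 - tcoeff \<phi> 3) * tcoeff \<phi> 3 + tcoeff p 4 = 5 * tcoeff f 5"
    using k[of 4] p1 p2 p3 coeffs by (simp add: P_def N_def D_def fps_mult_nth_small)
  then have p4: "tcoeff p 4 = 5 * tcoeff f 5 - tcoeff \<phi> 5 - (3 * tcoeff f 3 - tcoeff \<phi> 3) * tcoeff \<phi> 3"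
    by algebra
  show ?thesis using that p p1 p2 p3 p4 by blast
qed

lemma starlike_caratheodory:
  assumes f: "starlike_fun f" and a2: "tcoeff f 2 = 0"
  obtains p where "caratheodory p" "tcoeff p 1 = 0" "tcoeff p 2 = 2 * tcoeff f 3"
    "tcoeff p 3 = 3 * tcoeff f 4" "tcoeff p 4 = 4 * tcoeff f 5 - 2 * (tcoeff f 3)^2"
proof -
  have "f holomorphic_on ball 0 1" "f 0 = 0" "deriv f 0 = 1"
    "\<And>z. z \<in> ball 0 1 - {0} \<Longrightarrow> f z \<noteq> 0 \<and> 0 < Re (z * deriv f z / f z)"
    using f by (auto simp: starlike_fun_def normalized_analytic_def)
  from quotient_caratheodory[OF this(1,3) a2 this(1-3) a2 this(4)] obtain p where
    "caratheodory p" "tcoeff p 1 = 0" "tcoeff p 2 = 3 * tcoeff f 3 - tcoeff f 3"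
    "tcoeff p 3 = 4 * tcoeff f 4 - tcoeff f 4"
    "tcoeff p 4 = 5 * tcoeff f 5 - tcoeff f 5 - (3 * tcoeff f 3 - tcoeff f 3) * tcoeff f 3" .
  then show ?thesis by (intro that[of p]) (simp_all add: algebra_simps power2_eq_square)
qed

lemma starlike_inverse_hankel23_le:
  assumes f: "starlike_fun f" and a2: "tcoeff f 2 = 0"
  shows "norm (inverse_hankel23 f) \<le> 2"
proof -
  obtain p where p: "caratheodory p" "tcoeff p 1 = 0" "tcoeff p 2 = 2 * tcoeff f 3"
    "tcoeff p 3 = 3 * tcoeff f 4" "tcoeff p 4 = 4 * tcoeff f 5 - 2 * (tcoeff f 3)^2"
    using starlike_caratheodory[OF f a2] by blast
  obtain x y u where xyu: "schur_coeffs x y u"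
    and c: "tcoeff p 2 = 2 * x" "tcoeff p 3 = 2 * y" "tcoeff p 4 = 2 * u + 2 * x^2"
    using caratheodory_schur_coeffs[OF p(1,2)] by blast
  have "inverse_hankel23 f = 1/2 * x * u - 2 * x^3 - 4/9 * y^2"
    using p(3-5) c unfolding inverse_hankel23_def by algebra
  with schur_coeffs_cubic_le[OF xyu, of "1/2" "4/9" 2] show ?thesis by simp
qed

lemma convex_starlike_z_deriv:
  assumes f: "convex_fun f"
  shows "starlike_fun (\<lambda>z. z * deriv f z)"
proof -
  have hol: "f holomorphic_on ball 0 1" and f1: "deriv f 0 = 1"
    and nz: "\<And>z. z \<in> ball 0 1 \<Longrightarrow> deriv f z \<noteq> 0"
    and re: "\<And>z. z \<in> ball 0 1 \<Longrightarrow> 0 < Re (1 + z * deriv (deriv f) z / deriv f z)"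
    using f by (auto simp: convex_fun_def normalized_analytic_def)
  have hol_df: "deriv f holomorphic_on ball 0 1" by (rule holomorphic_deriv[OF hol open_ball])
  have dg: "deriv (\<lambda>z. z * deriv f z) z = deriv f z + z * deriv (deriv f) z" if "z \<in> ball 0 1" for z
    using hol_df that
    by (auto intro!: DERIV_imp_deriv derivative_eq_intros DERIV_deriv_iff_field_differentiable[THEN iffD2]
        holomorphic_on_imp_differentiable_at)
  show ?thesis
    unfolding starlike_fun_def normalized_analytic_def
  proof (intro conjI ballI)
    show "(\<lambda>z. z * deriv f z) holomorphic_on ball 0 1" by (intro holomorphic_intros hol open_ball)
    show "deriv (\<lambda>z. z * deriv f z) 0 = 1" using dg[of 0] f1 by simp
    fix z :: complex assume z: "z \<in> ball 0 1 - {0}"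
    then show "z * deriv f z \<noteq> 0" using nz by auto
    have "z * deriv (\<lambda>z. z * deriv f z) z / (z * deriv f z) = 1 + z * deriv (deriv f) z / deriv f z"
      using z nz[of z] by (simp add: dg field_simps)
    then show "0 < Re (z * deriv (\<lambda>z. z * deriv f z) z / (z * deriv f z))" using re z by simp
  qed simp
qed

lemma convex_inverse_hankel23_le:
  assumes f: "convex_fun f" and a2: "tcoeff f 2 = 0"
  shows "norm (inverse_hankel23 f) \<le> 2/45"
proof -
  have "f holomorphic_on ball 0 1" using f by (simp add: convex_fun_def normalized_analytic_def)
  then have hol_df: "deriv f holomorphic_on ball 0 1" by (rule holomorphic_deriv[OF _ open_ball])
  define g where "g = (\<lambda>z. z * deriv f z)"
  have b: "tcoeff g (Suc n) = of_nat (Suc n) * tcoeff f (Suc n)" for n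
    using tcoeff_z_mult[OF hol_df, of n] tcoeff_deriv[of f n] by (simp add: g_def)
  have g: "tcoeff g 2 = 0" "tcoeff g 3 = 3 * tcoeff f 3" "tcoeff g 4 = 4 * tcoeff f 4" "tcoeff g 5 = 5 * tcoeff f 5"
    using a2 b[of 1] b[of 2] b[of 3] b[of 4] by (simp_all add: eval_nat_numeral)
  obtain p where p: "caratheodory p" "tcoeff p 1 = 0" "tcoeff p 2 = 2 * tcoeff g 3"
    "tcoeff p 3 = 3 * tcoeff g 4" "tcoeff p 4 = 4 * tcoeff g 5 - 2 * (tcoeff g 3)^2"
    using starlike_caratheodory[OF convex_starlike_z_deriv[OF f, folded g_def] g(1)] by blast
  obtain x y u where xyu: "schur_coeffs x y u"
    and c: "tcoeff p 2 = 2 * x" "tcoeff p 3 = 2 * y" "tcoeff p 4 = 2 * u + 2 * x^2"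
    using caratheodory_schur_coeffs[OF p(1,2)] by blast
  have "inverse_hankel23 f = 1/30 * x * u - 2/45 * x^3 - 1/36 * y^2"
    using p(3-5) c g(2-4) unfolding inverse_hankel23_def by algebra
  with schur_coeffs_cubic_le[OF xyu, of "1/30" "1/36" "2/45"] show ?thesis by simp
qed

lemma starlike_sym_caratheodory:
  assumes f: "starlike_sym f" and a2: "tcoeff f 2 = 0"
  obtains p where "caratheodory p" "tcoeff p 1 = 0" "tcoeff p 2 = 2 * tcoeff f 3"
    "tcoeff p 3 = 4 * tcoeff f 4" "tcoeff p 4 = 4 * tcoeff f 5 - 2 * (tcoeff f 3)^2"
proof -
  have hol: "f holomorphic_on ball 0 1" and f1: "deriv f 0 = 1"
    and re: "\<And>z. z \<in> ball 0 1 - {0} \<Longrightarrow>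
      f z - f (- z) \<noteq> 0 \<and> 0 < Re (2 * z * deriv f z / (f z - f (- z)))"
    using f by (auto simp: starlike_sym_def normalized_analytic_def)
  define \<phi> where "\<phi> = (\<lambda>z. (f z - f (- z)) / 2)"
  have "(f \<circ> uminus) holomorphic_on ball 0 1"
    by (rule holomorphic_on_compose_gen[OF _ hol]) (auto intro: holomorphic_intros)
  note hol_reflect = this[unfolded comp_def]
  have hol_\<phi>: "\<phi> holomorphic_on ball 0 1"
    unfolding \<phi>_def by (auto intro!: holomorphic_intros hol hol_reflect)
  have t\<phi>: "tcoeff \<phi> n = (if odd n then tcoeff f n else 0)" for n
    unfolding \<phi>_def by (rule tcoeff_odd_part[OF hol])
  have \<phi>0: "\<phi> 0 = 0" by (simp add: \<phi>_def)
  have \<phi>1: "deriv \<phi> 0 = 1" using t\<phi>[of 1] f1 by (simp add: tcoeff_Suc_0)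
  have \<phi>2: "tcoeff \<phi> 2 = 0" by (simp add: t\<phi>)
  have re\<phi>: "\<phi> z \<noteq> 0 \<and> 0 < Re (z * deriv f z / \<phi> z)" if "z \<in> ball 0 1 - {0}" for z
    using re[OF that] by (simp add: \<phi>_def field_simps)
  obtain p where "caratheodory p" "tcoeff p 1 = 0"
    "tcoeff p 2 = 3 * tcoeff f 3 - tcoeff \<phi> 3" "tcoeff p 3 = 4 * tcoeff f 4 - tcoeff \<phi> 4"
    "tcoeff p 4 = 5 * tcoeff f 5 - tcoeff \<phi> 5 - (3 * tcoeff f 3 - tcoeff \<phi> 3) * tcoeff \<phi> 3"
    by (rule quotient_caratheodory[OF hol f1 a2 hol_\<phi> \<phi>0 \<phi>1 \<phi>2 re\<phi>])
  then show ?thesis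
    by (intro that[of p]) (simp_all add: t\<phi> algebra_simps power2_eq_square)
qed

lemma starlike_sym_inverse_hankel23_le:
  assumes f: "starlike_sym f" and a2: "tcoeff f 2 = 0"
  shows "norm (inverse_hankel23 f) \<le> 2"
proof -
  obtain p where p: "caratheodory p" "tcoeff p 1 = 0" "tcoeff p 2 = 2 * tcoeff f 3"
    "tcoeff p 3 = 4 * tcoeff f 4" "tcoeff p 4 = 4 * tcoeff f 5 - 2 * (tcoeff f 3)^2"
    using starlike_sym_caratheodory[OF f a2] by blast
  obtain x y u where xyu: "schur_coeffs x y u"
    and c: "tcoeff p 2 = 2 * x" "tcoeff p 3 = 2 * y" "tcoeff p 4 = 2 * u + 2 * x^2"
    using caratheodory_schur_coeffs[OF p(1,2)] by blast
  have "inverse_hankel23 f = 1/2 * x * u - 2 * x^3 - 1/4 * y^2"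
    using p(3-5) c unfolding inverse_hankel23_def by algebra
  with schur_coeffs_cubic_le[OF xyu, of "1/2" "1/4" 2] show ?thesis by simp
qed

section \<open>Extremal functions\<close>

lemma one_minus_square_nonzero:
  fixes z :: complex
  assumes "z \<in> ball 0 1"
  shows "1 - z^2 \<noteq> 0"
proof
  assume "1 - z^2 = 0"
  then have "(norm z)^2 = 1" by (metis norm_one norm_power right_minus_eq)
  moreover have "(norm z)^2 < 1" using assms by (simp add: abs_square_less_1)
  ultimately show False by simp
qed

lemma holomorphic_inverse_one_minus_square: "(\<lambda>z::complex. 1 / (1 - z^2)) holomorphic_on ball 0 1"
  using one_minus_square_nonzero by (intro holomorphic_intros) auto

lemma re_one_plus_square_div_pos:
  fixes z :: complex
  assumes "z \<in> ball 0 1"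
  shows "0 < Re ((1 + z^2) / (1 - z^2))"
proof -
  have "(norm (z^2))^2 < 1" using assms by (simp add: norm_power abs_square_less_1 power_less_one_iff)
  then have "(Re (z^2))^2 + (Im (z^2))^2 < 1" by (simp add: cmod_power2)
  then have "0 < Re (1 + z^2) * Re (1 - z^2) + Im (1 + z^2) * Im (1 - z^2)"
    by (simp add: algebra_simps power2_eq_square)
  moreover have "0 < (norm (1 - z^2))^2" using one_minus_square_nonzero[OF assms] by simp
  ultimately show ?thesis unfolding Re_divide' by simp
qed

lemma fps_one_minus_X_square_inverse_nth:
  assumes "(1 - fps_X^2) * G = (1 :: complex fps)"
  shows "G $ n = (if even n then 1 else 0)"
proof -
  have rec: "G $ n = (if n = 0 then 1 else 0) + (if n < 2 then 0 else G $ (n - 2))" for n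
  proof -
    have "G $ n - (fps_X^2 * G) $ n = (1 :: complex fps) $ n"
      using arg_cong[OF assms, of "\<lambda>F. F $ n"] by (simp only: left_diff_distrib fps_sub_nth mult_1)
    then show ?thesis by (simp add: fps_X_power_mult_nth split: if_splits)
  qed
  show ?thesis
  proof (induction n rule: less_induct)
    case (less n)
    show ?case
    proof (cases "n < 2")
      case True
      then show ?thesis using rec[of n] by (auto simp: less_2_cases_iff)
    next
      case False
      then have "G $ n = G $ (n - 2)" "even (n - 2) \<longleftrightarrow> even n" using rec[of n] by auto
      with less[of "n - 2"] False show ?thesis by simp
    qed
  qed
qed

lemma tcoeff_inverse_one_minus_square:
  "tcoeff (\<lambda>z. 1 / (1 - z^2)) n = (if even n then 1 else 0)"
proof -
  have "(1 - fps_X^2) * fps_expansion (\<lambda>z::complex. 1 / (1 - z^2)) 0 = 1"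
  proof (rule fps_mult_eq_on_ball[OF _ has_fps_expansion_disc[OF holomorphic_inverse_one_minus_square]
        has_fps_expansion_1 zero_less_one])
    show "(\<lambda>z. 1 - z^2) has_fps_expansion 1 - fps_X^2" by (intro fps_expansion_intros)
    show "(1 - z^2) * (1 / (1 - z^2)) = 1" if "z \<in> ball 0 1" for z :: complex
      using one_minus_square_nonzero[OF that] by simp
  qed
  from fps_one_minus_X_square_inverse_nth[OF this] show ?thesis by simp
qed

definition odd_koebe :: "complex \<Rightarrow> complex" where
  "odd_koebe z = z / (1 - z^2)"

lemma odd_koebe_extremal:
  shows "starlike_fun odd_koebe" "starlike_sym odd_koebe"
    "tcoeff odd_koebe 2 = 0" "inverse_hankel23 odd_koebe = - 2"
proof -
  have hol: "odd_koebe holomorphic_on ball 0 1"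
    unfolding odd_koebe_def[abs_def] using one_minus_square_nonzero by (intro holomorphic_intros) auto
  have d: "deriv odd_koebe z = (1 + z^2) / (1 - z^2)^2" if "z \<in> ball 0 1" for z
    unfolding odd_koebe_def[abs_def] using one_minus_square_nonzero[OF that]
    by (intro DERIV_imp_deriv) (auto intro!: derivative_eq_intros simp: field_simps power2_eq_square)
  have na: "normalized_analytic odd_koebe"
    unfolding normalized_analytic_def using hol d[of 0] by (simp add: odd_koebe_def)
  have fnz: "odd_koebe z \<noteq> 0" if "z \<in> ball 0 1 - {0}" for z
    using that one_minus_square_nonzero[of z] by (simp add: odd_koebe_def)
  have q: "z * deriv odd_koebe z / odd_koebe z = (1 + z^2) / (1 - z^2)" if "z \<in> ball 0 1 - {0}" for z
  proof -
    have "z * (a / w^2) / (z / w) = a / w" if "z \<noteq> 0" "w \<noteq> 0" for a w :: complex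
      using that by (simp add: field_simps power2_eq_square)
    then show ?thesis
      using that one_minus_square_nonzero[of z] by (simp add: d odd_koebe_def)
  qed
  show "starlike_fun odd_koebe"
    unfolding starlike_fun_def using na fnz q re_one_plus_square_div_pos by auto
  have odd: "odd_koebe (- z) = - odd_koebe z" for z by (simp add: odd_koebe_def)
  show "starlike_sym odd_koebe"
    unfolding starlike_sym_def using na fnz q re_one_plus_square_div_pos by (auto simp: odd)
  have c: "tcoeff odd_koebe (Suc n) = (if even n then 1 else 0)" for n
  proof -
    have "odd_koebe = (\<lambda>z. z * (1 / (1 - z^2)))" by (simp add: odd_koebe_def[abs_def])
    then show ?thesis
      using tcoeff_z_mult[OF holomorphic_inverse_one_minus_square, of n]
      by (simp add: tcoeff_inverse_one_minus_square)
  qed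
  have "tcoeff odd_koebe 2 = 0" using c[of 1] by (simp add: numeral_2_eq_2)
  moreover have "tcoeff odd_koebe 3 = 1" "tcoeff odd_koebe 4 = 0" "tcoeff odd_koebe 5 = 1"
    using c[of 2] c[of 3] c[of 4] by simp_all
  ultimately show "tcoeff odd_koebe 2 = 0" "inverse_hankel23 odd_koebe = - 2"
    by (simp_all add: inverse_hankel23_def)
qed

definition complex_artanh :: "complex \<Rightarrow> complex" where
  "complex_artanh z = (Ln (1 + z) - Ln (1 - z)) / 2"

lemma has_field_derivative_complex_artanh:
  assumes z: "z \<in> ball 0 1"
  shows "(complex_artanh has_field_derivative 1 / (1 - z^2)) (at z)"
proof -
  have "\<bar>Re z\<bar> < 1" using abs_Re_le_cmod[of z] z by simp
  then have Ln: "1 + z \<notin> \<real>\<^sub>\<le>\<^sub>0" "1 - z \<notin> \<real>\<^sub>\<le>\<^sub>0" by (auto simp: complex_nonpos_Reals_iff)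
  then have "1 + z \<noteq> 0" "1 - z \<noteq> 0" by auto
  with Ln one_minus_square_nonzero[OF z] show ?thesis
    unfolding complex_artanh_def[abs_def]
    by (auto intro!: derivative_eq_intros simp: field_simps power2_eq_square)
qed

lemma deriv_complex_artanh: "z \<in> ball 0 1 \<Longrightarrow> deriv complex_artanh z = 1 / (1 - z^2)"
  by (rule DERIV_imp_deriv[OF has_field_derivative_complex_artanh])

lemma holomorphic_complex_artanh: "complex_artanh holomorphic_on ball 0 1"
  unfolding holomorphic_on_open[OF open_ball] using has_field_derivative_complex_artanh by blast

lemma tcoeff_complex_artanh:
  "tcoeff complex_artanh (Suc n) = (if even n then 1 / of_nat (Suc n) else 0)"
proof -
  have "of_nat (Suc n) * tcoeff complex_artanh (Suc n) = tcoeff (\<lambda>z. 1 / (1 - z^2)) n"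
    unfolding tcoeff_deriv[symmetric] by (rule tcoeff_cong_ball[OF zero_less_one deriv_complex_artanh])
  then show ?thesis
    by (cases "even n") (simp_all add: tcoeff_inverse_one_minus_square field_simps del: of_nat_Suc)
qed

lemma complex_artanh_extremal:
  shows "convex_fun complex_artanh" "tcoeff complex_artanh 2 = 0"
    "inverse_hankel23 complex_artanh = - 2/45"
proof -
  have dd: "deriv (deriv complex_artanh) z = 2 * z / (1 - z^2)^2" if z: "z \<in> ball 0 1" for z
  proof -
    have "deriv (deriv complex_artanh) z = deriv (\<lambda>z. 1 / (1 - z^2)) z"
      using eventually_nhds_in_open[OF open_ball z] deriv_complex_artanh
      by (intro deriv_cong_ev) (auto elim!: eventually_mono)
    also have "\<dots> = 2 * z / (1 - z^2)^2"
      using one_minus_square_nonzero[OF z]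
      by (intro DERIV_imp_deriv) (auto intro!: derivative_eq_intros simp: field_simps power2_eq_square)
    finally show ?thesis .
  qed
  have "1 + z * deriv (deriv complex_artanh) z / deriv complex_artanh z = (1 + z^2) / (1 - z^2)"
    if z: "z \<in> ball 0 1" for z
  proof -
    have "1 + z * (2 * z / w^2) / (1 / w) = (w + 2 * z^2) / w" if "w \<noteq> 0" for w :: complex
      using that by (simp add: field_simps power2_eq_square)
    from this[OF one_minus_square_nonzero[OF z]] show ?thesis
      by (simp add: dd[OF z] deriv_complex_artanh[OF z])
  qed
  then show "convex_fun complex_artanh"
    unfolding convex_fun_def normalized_analytic_def
    using holomorphic_complex_artanh deriv_complex_artanh one_minus_square_nonzero re_one_plus_square_div_pos
    by (auto simp: complex_artanh_def)
  show "tcoeff complex_artanh 2 = 0" using tcoeff_complex_artanh[of 1] by (simp add: numeral_2_eq_2)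
  have a: "tcoeff complex_artanh 3 = 1/3" "tcoeff complex_artanh 4 = 0" "tcoeff complex_artanh 5 = 1/5"
    using tcoeff_complex_artanh[of 2] tcoeff_complex_artanh[of 3] tcoeff_complex_artanh[of 4] by simp_all
  show "inverse_hankel23 complex_artanh = - 2/45"
    unfolding inverse_hankel23_def a by (simp add: power3_eq_cube)
qed

lemma bounded_turning_extremal:
  defines "f \<equiv> \<lambda>z. 2 * complex_artanh z - z"
  shows "bounded_turning f" "tcoeff f 2 = 0" "inverse_hankel23 f = - 28/45"
proof -
  have d: "deriv f z = (1 + z^2) / (1 - z^2)" if z: "z \<in> ball 0 1" for z
    using one_minus_square_nonzero[OF z] unfolding f_def
    by (intro DERIV_imp_deriv)
       (auto intro!: derivative_eq_intros has_field_derivative_complex_artanh[OF z]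
         simp: field_simps power2_eq_square)
  have "f holomorphic_on ball 0 1"
    unfolding f_def by (intro holomorphic_intros holomorphic_complex_artanh)
  then show "bounded_turning f"
    unfolding bounded_turning_def normalized_analytic_def
    using d[of 0] d re_one_plus_square_div_pos by (simp add: f_def complex_artanh_def)
  have "f has_fps_expansion fps_const 2 * fps_expansion complex_artanh 0 - fps_X"
    unfolding f_def by (intro fps_expansion_intros has_fps_expansion_disc[OF holomorphic_complex_artanh])
  then have a: "tcoeff f n = 2 * tcoeff complex_artanh n" if "2 \<le> n" for n
    using that by (simp add: tcoeff_eq_fps_nth)
  show "tcoeff f 2 = 0" using a[of 2] tcoeff_complex_artanh[of 1] by (simp add: numeral_2_eq_2)
  have b: "tcoeff f 3 = 2/3" "tcoeff f 4 = 0" "tcoeff f 5 = 2/5"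
    using a[of 3] a[of 4] a[of 5] tcoeff_complex_artanh[of 2] tcoeff_complex_artanh[of 3]
      tcoeff_complex_artanh[of 4]
    by (simp_all add: mult.commute)
  show "inverse_hankel23 f = - 28/45"
    unfolding inverse_hankel23_def b by (simp add: power3_eq_cube)
qed

lemma sharp_inv_hankel_boundI:
  assumes "\<And>f. P f \<Longrightarrow> normalized_analytic f"
    and "\<And>f. P f \<Longrightarrow> tcoeff f 2 = 0 \<Longrightarrow> norm (inverse_hankel23 f) \<le> B"
    and "P f\<^sub>0" "tcoeff f\<^sub>0 2 = 0" "norm (inverse_hankel23 f\<^sub>0) = B"
  shows "sharp_inv_hankel_bound P B"
  unfolding sharp_inv_hankel_bound_def
proof (intro conjI allI impI)
  show "norm (hankel23 g) \<le> B" if "P f \<and> tcoeff f 2 = 0 \<and> local_inverse f g S" for f g S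
    using that assms(1,2) hankel23_local_inverse by metis
  obtain g S where "local_inverse f\<^sub>0 g S" using local_inverse_exists assms(1,3) by blast
  with assms(1,3-5) hankel23_local_inverse
  show "\<exists>f g S. P f \<and> tcoeff f 2 = 0 \<and> local_inverse f g S \<and> norm (hankel23 g) = B"
    by metis
qed

theorem theorem1:
  shows "sharp_inv_hankel_bound bounded_turning (28/45) \<and>
         sharp_inv_hankel_bound convex_fun (2/45) \<and>
         sharp_inv_hankel_bound starlike_fun 2 \<and>
         sharp_inv_hankel_bound starlike_sym 2"
proof (intro conjI)
  show "sharp_inv_hankel_bound bounded_turning (28/45)"
    using bounded_turning_inverse_hankel23_le bounded_turning_extremal
    by (intro sharp_inv_hankel_boundI) (auto simp: bounded_turning_def)
  show "sharp_inv_hankel_bound convex_fun (2/45)"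
    using convex_inverse_hankel23_le complex_artanh_extremal
    by (intro sharp_inv_hankel_boundI) (auto simp: convex_fun_def)
  show "sharp_inv_hankel_bound starlike_fun 2"
    using starlike_inverse_hankel23_le odd_koebe_extremal
    by (intro sharp_inv_hankel_boundI) (auto simp: starlike_fun_def)
  show "sharp_inv_hankel_bound starlike_sym 2"
    using starlike_sym_inverse_hankel23_le odd_koebe_extremal
    by (intro sharp_inv_hankel_boundI) (auto simp: starlike_sym_def)
qed

end
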